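(* Let $k\ge2$ and let $f$ be a smooth function on $\mathcal E_k$ (depending on finitely many coordinates) such that $D^{(k)}_x(f)=D^{(k)}_y(f)=0$. Then $f$ is constant.
   Context: Let $\mathcal E_1$ be the system $u_y+vu_x=\frac1{v-u}$, $v_y+uv_x=\frac1{u-v}$ with internal coordinates $x,y,u_i=\partial^iu/\partial x^i$, $v_i=\partial^iv/\partial x^i$ ($i\ge0$) and total derivatives $D_x=\partial_x+\sum_i(u_{i+1}\partial_{u_i}+v_{i+1}\partial_{v_i})$, $D_y=\partial_y+\sum_i\big(D_x^i(\tfrac1{v-u}-vu_1)\partial_{u_i}+D_x^i(\tfrac1{u-v}-uv_1)\partial_{v_i}\big)$. Let $\sigma_m=\sum_{i+j=m}u^iv^j$, $\psi^{(1)}=y$, $\psi^{(2)}=x$, and let $\psi^{(k)}$, $k\ge3$, be new coordinates; for $k\ge2$ put $X^{(k)}=\sigma_{k-2}-\sum_{i=1}^{k-3}i\,\sigma_{k-i-3}\psi^{(i)}$ and for $k\ge3$ put $Y^{(k)}=-uv\,X^{(k-1)}-(k-2)\psi^{(k-2)}$. For $k\ge2$, $\mathcal E_k=\mathcal E_1\times\mathbb R^{k-1}$ has the additional coordinates $\psi^{(3)},\dots,\psi^{(k+1)}$ and the commuting vector fields $D^{(k)}_x=D_x+\sum_{i=3}^{k+1}X^{(i)}\partial/\partial\psi^{(i)}$, $D^{(k)}_y=D_y+\sum_{i=3}^{k+1}Y^{(i)}\partial/\partial\psi^{(i)}$. *)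

theory Defs
  imports "HOL-Analysis.Analysis"
begin

text \<open>Coordinates of the (infinite) jet space: x, y, u_i, v_i (i \<ge> 0), and the
  nonlocal coordinates psi^(j) (only j = 3..k+1 are coordinates of E_k).\<close>
datatype coord = CX | CY | CU nat | CV nat | CPsi nat

type_synonym pt = "coord \<Rightarrow> real"

definition pd :: "coord \<Rightarrow> (pt \<Rightarrow> real) \<Rightarrow> pt \<Rightarrow> real" where
  "pd c g p = deriv (\<lambda>t. g (p(c := t))) (p c)"

fun iterpd :: "coord list \<Rightarrow> (pt \<Rightarrow> real) \<Rightarrow> pt \<Rightarrow> real" where
  "iterpd [] g = g"
| "iterpd (c # cs) g = pd c (iterpd cs g)"

definition smooth_on :: "pt set \<Rightarrow> (pt \<Rightarrow> real) \<Rightarrow> bool" where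
  "smooth_on S g \<longleftrightarrow>
     (\<forall>cs. continuous_on S (iterpd cs g) \<and>
        (\<forall>c. \<forall>p\<in>S. ((\<lambda>t. iterpd cs g (p(c := t))) has_real_derivative
                        pd c (iterpd cs g) p) (at (p c))))"

definition Omega :: "pt set" where
  "Omega = {p. p (CU 0) \<noteq> p (CV 0)}"

text \<open>Total derivative D_x, with the sum truncated at M (the truncation is
  harmless once g does not depend on u_i, v_i for i \<ge> M).\<close>
definition TDx :: "nat \<Rightarrow> (pt \<Rightarrow> real) \<Rightarrow> pt \<Rightarrow> real" where
  "TDx M g p = pd CX g p +
     (\<Sum>i<M. p (CU (Suc i)) * pd (CU i) g p + p (CV (Suc i)) * pd (CV i) g p)"

definition rhsU :: "pt \<Rightarrow> real" where
  "rhsU p = 1 / (p (CV 0) - p (CU 0)) - p (CV 0) * p (CU 1)"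

definition rhsV :: "pt \<Rightarrow> real" where
  "rhsV p = 1 / (p (CU 0) - p (CV 0)) - p (CU 0) * p (CV 1)"

text \<open>Total derivative D_y; D_x^i of the right-hand sides (i < M) depend only
  on coordinates of index \<le> M, so truncation M+2 in these D_x is exact.\<close>
definition TDy :: "nat \<Rightarrow> (pt \<Rightarrow> real) \<Rightarrow> pt \<Rightarrow> real" where
  "TDy M g p = pd CY g p +
     (\<Sum>i<M. (TDx (M + 2) ^^ i) rhsU p * pd (CU i) g p
            + (TDx (M + 2) ^^ i) rhsV p * pd (CV i) g p)"

definition sigma :: "pt \<Rightarrow> nat \<Rightarrow> real" where
  "sigma p m = (\<Sum>a\<le>m. p (CU 0) ^ a * p (CV 0) ^ (m - a))"

definition psiv :: "pt \<Rightarrow> nat \<Rightarrow> real" where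
  "psiv p j = (if j = 1 then p CY else if j = 2 then p CX else p (CPsi j))"

definition Xk :: "pt \<Rightarrow> nat \<Rightarrow> real" where
  "Xk p k = sigma p (k - 2) - (\<Sum>i = 1..k - 3. real i * sigma p (k - i - 3) * psiv p i)"

definition Yk :: "pt \<Rightarrow> nat \<Rightarrow> real" where
  "Yk p k = - (p (CU 0) * p (CV 0)) * Xk p (k - 1) - real (k - 2) * psiv p (k - 2)"

definition DxK :: "nat \<Rightarrow> nat \<Rightarrow> (pt \<Rightarrow> real) \<Rightarrow> pt \<Rightarrow> real" where
  "DxK k M g p = TDx M g p + (\<Sum>i = 3..k + 1. Xk p i * pd (CPsi i) g p)"

definition DyK :: "nat \<Rightarrow> nat \<Rightarrow> (pt \<Rightarrow> real) \<Rightarrow> pt \<Rightarrow> real" where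
  "DyK k M g p = TDy M g p + (\<Sum>i = 3..k + 1. Yk p i * pd (CPsi i) g p)"

definition relevant :: "nat \<Rightarrow> nat \<Rightarrow> coord \<Rightarrow> bool" where
  "relevant k N c \<longleftrightarrow> c = CX \<or> c = CY \<or> (\<exists>i<N. c = CU i \<or> c = CV i)
      \<or> (\<exists>j. 3 \<le> j \<and> j \<le> k + 1 \<and> c = CPsi j)"

end

theory Submission
  imports Defs "HOL-Computational_Algebra.Polynomial"
begin

(* In D_x the coefficients of d/du_i and d/dv_i are the free coordinates u_(i+1) and v_(i+1).
   Shifting u_(n+1) (resp. v_(n+1)), on which f no longer depends, therefore changes D_x f by
   exactly d f/du_n (resp. d f/dv_n); by downward induction f depends on no u_i, v_i at all.
   On the slice v = 0 the coefficient X^(i) of d/dpsi^(i) is a monic polynomial of degree i - 2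
   in u, so D_x f = 0 for all u forces d f/dx and every d f/dpsi^(i) to vanish, and then
   D_y f = d f/dy = 0. With all partial derivatives zero, f is constant on each of the two
   components u < v and u > v of the domain. *)

lemma has_real_derivative_pd:
  assumes "smooth_on Omega f" "p(c := t) \<in> Omega"
  shows "((\<lambda>s. f (p(c := s))) has_real_derivative pd c f (p(c := t))) (at t)"
proof -
  have "((\<lambda>s. iterpd [] f ((p(c := t))(c := s))) has_real_derivative
          pd c (iterpd [] f) (p(c := t))) (at ((p(c := t)) c))"
    using assms unfolding smooth_on_def by blast
  then show ?thesis by simp
qed

lemma pd_eq_0_if_const:
  assumes "\<And>t. g (p(c := t)) = g p"
  shows "pd c g p = 0"
  using assms by (simp add: pd_def)

lemma DERIV_zero_imp_eq:
  fixes g :: "real \<Rightarrow> real"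
  assumes "\<And>t. t \<in> {min s1 s2..max s1 s2} \<Longrightarrow> (g has_real_derivative 0) (at t)"
  shows "g s1 = g s2"
proof -
  obtain C where "\<forall>t\<in>{min s1 s2..max s1 s2}. g t = C"
    using has_field_derivative_zero_constant[of "{min s1 s2..max s1 s2}" g]
    by (metis assms convex_real_interval(5) has_field_derivative_at_within)
  then show ?thesis by auto
qed

lemma Omega_upd_iff: "c \<noteq> CU 0 \<Longrightarrow> c \<noteq> CV 0 \<Longrightarrow> p(c := t) \<in> Omega \<longleftrightarrow> p \<in> Omega"
  by (simp add: Omega_def)

lemma eventually_upd_in_Omega:
  assumes "p \<in> Omega"
  shows "eventually (\<lambda>t. p(c := t) \<in> Omega) (nhds (p c))"
proof -
  have "continuous_on UNIV (\<lambda>t. (p(c := t)) d)" for d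
    by (cases "c = d") auto
  then have "open {t. (p(c := t)) (CU 0) \<noteq> (p(c := t)) (CV 0)}"
    by (intro open_Collect_neq)
  then have "eventually (\<lambda>t. t \<in> {t. (p(c := t)) (CU 0) \<noteq> (p(c := t)) (CV 0)}) (nhds (p c))"
    by (rule eventually_nhds_in_open) (use assms in \<open>auto simp: Omega_def\<close>)
  then show ?thesis
    by (simp add: Omega_def)
qed

lemma eq_along_line_if_pd_eq_0:
  assumes "smooth_on Omega f" "\<forall>q\<in>Omega. pd c f q = 0"
    and "\<And>t. t \<in> {min s1 s2..max s1 s2} \<Longrightarrow> p(c := t) \<in> Omega"
  shows "f (p(c := s1)) = f (p(c := s2))"
  using DERIV_zero_imp_eq[of s1 s2 "\<lambda>t. f (p(c := t))"] has_real_derivative_pd[OF assms(1)] assms(2,3)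
  by fastforce

lemma upd_invariant_if_pd_eq_0:
  assumes "smooth_on Omega f" "\<forall>q\<in>Omega. pd c f q = 0" "c \<noteq> CU 0" "c \<noteq> CV 0" "p \<in> Omega"
  shows "f (p(c := s)) = f p"
  using eq_along_line_if_pd_eq_0[OF assms(1,2), of s "p c" p] assms(3-5) by (simp add: Omega_upd_iff)

lemma override_on_invariant_if_pd_eq_0:
  assumes "smooth_on Omega f" "finite A" "p \<in> Omega"
    and "\<And>c. c \<in> A \<Longrightarrow> c \<noteq> CU 0 \<and> c \<noteq> CV 0 \<and> (\<forall>r\<in>Omega. pd c f r = 0)"
  shows "f (override_on p q A) = f p"
  using assms(2,4)
proof (induction A rule: finite_induct)
  case (insert c A)
  have "CU 0 \<notin> A" "CV 0 \<notin> A"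
    using insert.prems by auto
  then have "override_on p q A \<in> Omega"
    using assms(3) by (simp add: Omega_def)
  then have "f ((override_on p q A)(c := q c)) = f (override_on p q A)"
    using insert.prems by (intro upd_invariant_if_pd_eq_0[OF assms(1)]) auto
  moreover have "f (override_on p q A) = f p"
    using insert by simp
  ultimately show ?case
    by (simp only: override_on_insert)
qed simp

lemma pd_upd_eq_if_invariant:
  assumes "\<forall>q\<in>Omega. \<forall>s. f (q(d := s)) = f q" "d \<noteq> CU 0" "d \<noteq> CV 0" "p \<in> Omega"
  shows "pd c f (p(d := s)) = pd c f p"
proof (cases "c = d")
  case True
  have "pd d f (p(d := s)) = 0" "pd d f p = 0"
    using assms by (auto intro!: pd_eq_0_if_const simp: Omega_upd_iff)
  then show ?thesis using True by simp
next
  case False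
  have "eventually (\<lambda>t. f ((p(d := s))(c := t)) = f (p(c := t))) (nhds (p c))"
    using eventually_upd_in_Omega[OF assms(4), of c]
    by eventually_elim (use assms False in \<open>simp add: fun_upd_twist\<close>)
  then show ?thesis unfolding pd_def using False by (intro deriv_cong_ev) auto
qed

lemma Xk_upd_jet:
  assumes "C = CU \<or> C = CV"
  shows "Xk (p(C (Suc n) := s)) i = Xk p i"
proof -
  have "psiv (p(C (Suc n) := s)) j = psiv p j" for j
    using assms by (auto simp: psiv_def)
  then show ?thesis
    using assms by (auto simp: Xk_def sigma_def)
qed

lemma DxK_upd_jet:
  assumes "C = CU \<or> C = CV" "n < N"
    and "\<And>c. pd c g (p(C (Suc n) := s)) = pd c g p"
  shows "DxK k N g (p(C (Suc n) := s)) = DxK k N g p + (s - p (C (Suc n))) * pd (C n) g p"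
proof -
  let ?p' = "p(C (Suc n) := s)"
  have "DxK k N g ?p' - DxK k N g p
      = (\<Sum>i<N. (?p' (CU (Suc i)) - p (CU (Suc i))) * pd (CU i) g p
               + (?p' (CV (Suc i)) - p (CV (Suc i))) * pd (CV i) g p)"
    using assms(1)
    by (simp add: DxK_def TDx_def assms(3) Xk_upd_jet algebra_simps sum.distrib sum_subtractf)
  also have "\<dots> = (\<Sum>i<N. if i = n then (s - p (C (Suc n))) * pd (C n) g p else 0)"
    using assms(1) by (intro sum.cong) auto
  finally show ?thesis
    using assms(2) by simp
qed

lemma eq_on_half_plane_if_pd_eq_0:
  assumes "smooth_on Omega f" "c1 \<noteq> c2"
    and half_plane: "\<And>q. q c1 < q c2 \<Longrightarrow> q \<in> Omega"
    and "\<forall>q\<in>Omega. pd c1 f q = 0" "\<forall>q\<in>Omega. pd c2 f q = 0"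
    and "p c1 < p c2" "a < b"
  shows "f (p(c1 := a, c2 := b)) = f p"
proof -
  define m where "m = min a (p c1)"
  \<comment> \<open>Move c1 down to m, then c2 to b, then c1 up to a: the path stays in the half plane.\<close>
  have "f (p(c1 := p c1)) = f (p(c1 := m))"
    by (rule eq_along_line_if_pd_eq_0[OF assms(1,4)])
      (use assms(2,6) in \<open>auto simp: m_def intro!: half_plane\<close>)
  moreover have "f ((p(c1 := m))(c2 := p c2)) = f ((p(c1 := m))(c2 := b))"
    by (rule eq_along_line_if_pd_eq_0[OF assms(1,5)])
      (use assms(2,6,7) in \<open>auto simp: m_def intro!: half_plane\<close>)
  moreover have "f ((p(c2 := b))(c1 := m)) = f ((p(c2 := b))(c1 := a))"
    by (rule eq_along_line_if_pd_eq_0[OF assms(1,4)])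
      (use assms(2,7) in \<open>auto simp: m_def intro!: half_plane\<close>)
  moreover have "(p(c1 := m))(c2 := p c2) = p(c1 := m)"
    using assms(2) by auto
  ultimately show ?thesis
    using assms(2) by (simp add: fun_upd_twist)
qed

lemma smult_sum_eq_0_distinct_degrees:
  fixes P :: "'i \<Rightarrow> 'a::idom poly"
  assumes "finite I" "inj_on (\<lambda>i. degree (P i)) I" "\<And>i. i \<in> I \<Longrightarrow> P i \<noteq> 0"
    and "(\<Sum>i\<in>I. smult (a i) (P i)) = 0"
  shows "\<forall>i\<in>I. a i = 0"
  using assms
proof (induction I rule: finite_ranking_induct[where f = "\<lambda>i. degree (P i)"])
  case (insert x I)
  show ?case
  proof (cases "x \<in> I")
    case True
    then show ?thesis using insert by (simp add: insert_absorb)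
  next
    case False
    have "coeff (P y) (degree (P x)) = 0" if "y \<in> I" for y
    proof -
      have "degree (P y) \<noteq> degree (P x)"
        using insert.prems(1) that False by (metis inj_onD insertI1 insertI2)
      then show ?thesis
        using insert.hyps(2)[OF that] by (intro coeff_eq_0) simp
    qed
    then have "coeff (\<Sum>i\<in>insert x I. smult (a i) (P i)) (degree (P x)) = a x * lead_coeff (P x)"
      using insert.hyps(1) False by (simp add: coeff_sum)
    then have "a x = 0"
      using insert.prems(2,3) by simp
    then show ?thesis
      using insert False by (simp add: inj_on_insert)
  qed
qed simp

(* On the slice v = 0 every sigma_m equals u^m, so X^(k) is this polynomial evaluated at u. *)
definition Xk_poly :: "(nat \<Rightarrow> real) \<Rightarrow> nat \<Rightarrow> real poly" where
  "Xk_poly \<psi> k = monom 1 (k - 2) - (\<Sum>i = 1..k - 3. smult (real i * \<psi> i) (monom 1 (k - i - 3)))"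

lemma sigma_v0_eq_0: "p (CV 0) = 0 \<Longrightarrow> sigma p m = p (CU 0) ^ m"
proof -
  assume "p (CV 0) = 0"
  then have "sigma p m = (\<Sum>a\<le>m. if a = m then p (CU 0) ^ m else 0)"
    unfolding sigma_def by (intro sum.cong) auto
  then show ?thesis by simp
qed

lemma Xk_eq_poly_Xk_poly: "p (CV 0) = 0 \<Longrightarrow> Xk p k = poly (Xk_poly (psiv p) k) (p (CU 0))"
  by (simp add: Xk_def Xk_poly_def sigma_v0_eq_0 poly_sum poly_monom mult_ac)

lemma degree_Xk_poly: "degree (Xk_poly \<psi> k) = k - 2"
proof (cases "k \<le> 3")
  case True
  then show ?thesis by (simp add: Xk_poly_def degree_monom_eq)
next
  case False
  have "degree (\<Sum>i = 1..k - 3. smult (real i * \<psi> i) (monom 1 (k - i - 3))) < k - 2"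
    using False by (intro degree_sum_less le_less_trans[OF degree_smult_le]) (auto simp: degree_monom_eq)
  then show ?thesis
    unfolding Xk_poly_def diff_conv_add_uminus by (subst degree_add_eq_left) (auto simp: degree_monom_eq)
qed

lemma Xk_poly_nonzero: "Xk_poly \<psi> k \<noteq> 0"
proof
  assume "Xk_poly \<psi> k = 0"
  moreover from this have "k \<le> 2"
    using degree_Xk_poly[of \<psi> k] by simp
  ultimately show False
    by (simp add: Xk_poly_def)
qed

locale first_integral =
  fixes k N :: nat and f :: "pt \<Rightarrow> real"
  assumes k_ge_2: "k \<ge> 2"
    and depends_on_relevant: "\<forall>p q. (\<forall>c. relevant k N c \<longrightarrow> p c = q c) \<longrightarrow> f p = f q"
    and smooth: "smooth_on Omega f"
    and DxK_eq_0: "\<forall>p\<in>Omega. DxK k N f p = 0"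
    and DyK_eq_0: "\<forall>p\<in>Omega. DyK k N f p = 0"
begin

lemma pd_irrelevant_eq_0: "\<not> relevant k N c \<Longrightarrow> pd c f p = 0"
  by (rule pd_eq_0_if_const) (auto intro!: depends_on_relevant[rule_format])

lemma pd_jet_step:
  assumes "C = CU \<or> C = CV" "n < N" "\<forall>q\<in>Omega. pd (C (Suc n)) f q = 0" "p \<in> Omega"
  shows "pd (C n) f p = 0"
proof -
  let ?p' = "p(C (Suc n) := p (C (Suc n)) + 1)"
  have invariant: "\<forall>q\<in>Omega. \<forall>s. f (q(C (Suc n) := s)) = f q"
    using assms(1,3) by (auto intro: upd_invariant_if_pd_eq_0[OF smooth])
  have "pd c f (p(C (Suc n) := s)) = pd c f p" for c s
    using assms(1,4) by (intro pd_upd_eq_if_invariant[OF invariant]) auto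
  then have "DxK k N f ?p' = DxK k N f p + pd (C n) f p"
    using assms(1,2) by (subst DxK_upd_jet) auto
  moreover have "?p' \<in> Omega"
    using assms(1,4) by (auto simp: Omega_upd_iff)
  ultimately show ?thesis
    using DxK_eq_0 assms(4) by simp
qed

lemma pd_jet_eq_0:
  assumes "C = CU \<or> C = CV" "p \<in> Omega"
  shows "pd (C i) f p = 0"
proof -
  have "\<forall>C\<in>{CU, CV}. \<forall>q\<in>Omega. pd (C i) f q = 0" if "i \<le> N" for i
    using that
  proof (induction rule: inc_induct)
    case base
    then show ?case by (auto intro!: pd_irrelevant_eq_0 simp: relevant_def)
  next
    case (step n)
    then show ?case using pd_jet_step by auto
  qed
  moreover have "pd (C i) f p = 0" if "N < i"
    using assms(1) that by (auto intro!: pd_irrelevant_eq_0 simp: relevant_def)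
  ultimately show ?thesis
    using assms by (cases "i \<le> N") auto
qed

lemma f_upd_u0_v0:
  assumes "p \<in> Omega" "a \<noteq> b" "a < b \<longleftrightarrow> p (CU 0) < p (CV 0)"
  shows "f (p(CU 0 := a, CV 0 := b)) = f p"
proof -
  have pd_u0_v0: "\<forall>q\<in>Omega. pd (CU 0) f q = 0" "\<forall>q\<in>Omega. pd (CV 0) f q = 0"
    using pd_jet_eq_0 by auto
  show ?thesis
  proof (cases "a < b")
    case True
    then show ?thesis
      using assms eq_on_half_plane_if_pd_eq_0[OF smooth _ _ pd_u0_v0]
      by (simp add: Omega_def)
  next
    case False
    then have "b < a" "p (CV 0) < p (CU 0)"
      using assms by (auto simp: Omega_def)
    then show ?thesis
      using eq_on_half_plane_if_pd_eq_0[OF smooth _ _ pd_u0_v0(2,1), of p b a]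
      by (simp add: Omega_def fun_upd_twist)
  qed
qed

lemma pd_upd_u0_v0:
  assumes "p \<in> Omega" "a \<noteq> b" "a < b \<longleftrightarrow> p (CU 0) < p (CV 0)" "c \<noteq> CU 0" "c \<noteq> CV 0"
  shows "pd c f (p(CU 0 := a, CV 0 := b)) = pd c f p"
proof -
  have "f ((p(CU 0 := a, CV 0 := b))(c := s)) = f (p(c := s))" for s
    using f_upd_u0_v0[of "p(c := s)" a b] assms by (simp add: Omega_upd_iff fun_upd_twist)
  then show ?thesis
    using assms(4,5) by (simp add: pd_def)
qed

lemma pd_x_psi_eq_0:
  assumes p: "p \<in> Omega"
  shows "pd CX f p = 0" "\<And>i. i \<in> {3..k+1} \<Longrightarrow> pd (CPsi i) f p = 0"
proof -
  \<comment> \<open>Index 2 stands for psi^(2) = x, whose coefficient X^(2) in D_x is 1.\<close>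
  define a where "a i = pd (if i = 2 then CX else CPsi i) f p" for i
  define Q where "Q = (\<Sum>i = 2..k+1. smult (a i) (Xk_poly (psiv p) i))"
  define T where "T = (if p (CU 0) < p (CV 0) then {..<0::real} else {0<..})"
  have "poly Q t = 0" if "t \<in> T" for t
  proof -
    let ?q = "p(CU 0 := t, CV 0 := 0)"
    have t: "t \<noteq> 0" "t < 0 \<longleftrightarrow> p (CU 0) < p (CV 0)"
      using that p by (auto simp: T_def Omega_def split: if_splits)
    then have q: "?q \<in> Omega"
      by (simp add: Omega_def)
    have "psiv ?q = psiv p"
      by (auto simp: psiv_def)
    have "DxK k N f ?q = pd CX f ?q + (\<Sum>i = 3..k+1. Xk ?q i * pd (CPsi i) f ?q)"
      using q by (simp add: DxK_def TDx_def pd_jet_eq_0)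
    also have "\<dots> = (\<Sum>i = 2..k+1. Xk ?q i * a i)"
      using k_ge_2 pd_upd_u0_v0[OF p t] by (simp add: a_def sum.atLeast_Suc_atMost Xk_def sigma_def)
    also have "\<dots> = poly Q t"
      using \<open>psiv ?q = psiv p\<close> by (simp add: Q_def poly_sum Xk_eq_poly_Xk_poly mult.commute)
    finally show ?thesis
      using DxK_eq_0 q by simp
  qed
  moreover have "infinite T"
    by (simp add: T_def infinite_Iio infinite_Ioi)
  ultimately have "Q = 0"
    using poly_roots_finite[of Q] by (meson finite_subset mem_Collect_eq subsetI)
  then have "\<forall>i\<in>{2..k+1}. a i = 0"
    unfolding Q_def
    by (intro smult_sum_eq_0_distinct_degrees) (auto simp: inj_on_def degree_Xk_poly Xk_poly_nonzero)
  then have "a 2 = 0" "\<And>i. i \<in> {3..k+1} \<Longrightarrow> a i = 0"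
    using k_ge_2 by auto
  then show "pd CX f p = 0" "\<And>i. i \<in> {3..k+1} \<Longrightarrow> pd (CPsi i) f p = 0"
    by (auto simp: a_def)
qed

lemma pd_y_eq_0:
  assumes "p \<in> Omega"
  shows "pd CY f p = 0"
  using DyK_eq_0 assms by (simp add: DyK_def TDy_def pd_jet_eq_0 pd_x_psi_eq_0)

lemma pd_eq_0:
  assumes "p \<in> Omega"
  shows "pd c f p = 0"
proof (cases c)
  case (CPsi j)
  then show ?thesis
    using assms pd_x_psi_eq_0(2) pd_irrelevant_eq_0 by (fastforce simp: relevant_def)
qed (use assms pd_jet_eq_0 pd_x_psi_eq_0 pd_y_eq_0 in auto)

lemma f_eq_on_same_side:
  assumes "p \<in> Omega" "q \<in> Omega" "p (CU 0) < p (CV 0) \<longleftrightarrow> q (CU 0) < q (CV 0)"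
  shows "f p = f q"
proof -
  define A where "A = {c. relevant k N c} - {CU 0, CV 0}"
  define r where "r = override_on p q A"
  have "A \<subseteq> {CX, CY} \<union> CU ` {..<N} \<union> CV ` {..<N} \<union> CPsi ` {3..k+1}"
    by (auto simp: A_def relevant_def)
  then have "finite A"
    by (rule finite_subset) simp
  then have "f r = f p"
    unfolding r_def using assms(1) pd_eq_0
    by (intro override_on_invariant_if_pd_eq_0[OF smooth]) (auto simp: A_def)
  moreover have "r \<in> Omega" "r (CU 0) = p (CU 0)" "r (CV 0) = p (CV 0)"
    using assms(1) by (auto simp: r_def A_def Omega_def)
  then have "f (r(CU 0 := q (CU 0), CV 0 := q (CV 0))) = f r"
    using assms(2,3) by (intro f_upd_u0_v0) (auto simp: Omega_def)
  moreover have "f (r(CU 0 := q (CU 0), CV 0 := q (CV 0))) = f q"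
    using depends_on_relevant by (auto simp: r_def A_def)
  ultimately show ?thesis
    by simp
qed

end

theorem mainTheorem6:
  fixes k N :: nat and f :: "pt \<Rightarrow> real"
  assumes "k \<ge> 2"
    and "\<forall>p q. (\<forall>c. relevant k N c \<longrightarrow> p c = q c) \<longrightarrow> f p = f q"
    and "smooth_on Omega f"
    and "\<forall>p\<in>Omega. DxK k N f p = 0"
    and "\<forall>p\<in>Omega. DyK k N f p = 0"
  shows "\<forall>p\<in>Omega. \<forall>q\<in>Omega.
           (p (CU 0) < p (CV 0) \<longleftrightarrow> q (CU 0) < q (CV 0)) \<longrightarrow> f p = f q"
proof -
  interpret first_integral k N f
    using assms by unfold_locales
  show ?thesis
    using f_eq_on_same_side by blast
qed

end
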